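(* For every $\lambda>0$ the real-valued function $x\mapsto K_{ix}(\lambda)$, $x\in\mathbb{R}$, takes negative values. Consequently, for every $\lambda>0$, the function $W_\lambda(m,u)=\frac{\lambda}{\pi}K_{i\lambda u}(\lambda)\exp\!\big(\lambda\sqrt{1-m^2}-\lambda u\arcsin m\big)$, $m\in(-1,1)$, $u\in\mathbb{R}$ (the solution of the exponential-operator construction for $v(m)=\sqrt{1-m^2}$) is not a probability density.
   Context: $K_\nu$ is the modified Bessel function of the second kind, $K_\nu(z)=\frac{\pi}{2}\frac{I_{-\nu}(z)-I_\nu(z)}{\sin(\pi\nu)}$ (extended by continuity), with $I_\nu(z)=\sum_{n\ge0}\frac{(z/2)^{\nu+2n}}{n!\Gamma(n+\nu+1)}$; for real $x$ and $\lambda>0$, $K_{ix}(\lambda)$ is real since $K_\nu=K_{-\nu}$. *)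

theory Defs
  imports "HOL-Analysis.Analysis"
begin

text \<open>Modified Bessel function of the first kind, I_nu(z) = sum_n (z/2)^(nu+2n) / (n! Gamma(n+nu+1)),
  with 1/Gamma written as rGamma (entire, vanishing at the poles of Gamma).\<close>
definition besselI :: "complex \<Rightarrow> complex \<Rightarrow> complex" where
  "besselI \<nu> z = (\<Sum>n. (z / 2) powr (\<nu> + 2 * of_nat n) * rGamma (of_nat n + \<nu> + 1) / fact n)"

definition besselK_raw :: "complex \<Rightarrow> complex \<Rightarrow> complex" where
  "besselK_raw \<nu> z = (of_real pi / 2) * (besselI (- \<nu>) z - besselI \<nu> z) / sin (of_real pi * \<nu>)"

definition besselK :: "complex \<Rightarrow> complex \<Rightarrow> complex" where
  "besselK \<nu> z = (if sin (of_real pi * \<nu>) \<noteq> 0 then besselK_raw \<nu> z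
                    else Lim (at \<nu>) (\<lambda>\<mu>. besselK_raw \<mu> z))"

text \<open>W_lambda(m,u) = lambda/pi K_{i lambda u}(lambda) exp(lambda sqrt(1-m^2) - lambda u arcsin m);
  K_{ix}(lambda) is real for real x, lambda > 0, so we take its real part.\<close>
definition W :: "real \<Rightarrow> real \<Rightarrow> real \<Rightarrow> real" where
  "W l m u = l / pi * Re (besselK (\<i> * complex_of_real (l * u)) (complex_of_real l))
               * exp (l * sqrt (1 - m\<^sup>2) - l * u * arcsin m)"

definition is_prob_density :: "(real \<times> real \<Rightarrow> real) \<Rightarrow> (real \<times> real) set \<Rightarrow> bool" where
  "is_prob_density f S \<longleftrightarrow> (\<forall>p\<in>S. 0 \<le> f p) \<and> (f has_integral 1) S"

end

theory Submission
  imports Defs "HOL-Real_Asymp.Real_Asymp"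
begin

text \<open>
  For real x \<noteq> 0 the order ix is non-real, so I_{-ix}(\<lambda>) is the complex conjugate of I_{ix}(\<lambda>)
  and K_{ix}(\<lambda>) = -\<pi> Im I_{ix}(\<lambda>) / sinh(\<pi> x).  Write
  I_{ix}(\<lambda>) = (\<lambda>/2)^{ix} / \<Gamma>(1 + ix) \<cdot> S(x) with S(x) = \<Sum> (\<lambda>^2/4)^n / (n! (1 + ix)_n).
  Since |(1 + ix)_n| \<ge> x^n, S(x) is close to 1 once x is large compared with \<lambda>^2.  The prefactor
  has phase x ln(\<lambda>/2) - Im ln \<Gamma>(1 + ix), which is continuous and tends to -\<infinity>, because
  Im ln \<Gamma>(1 + im) \<ge> m ln m - \<pi> m/2 (read off from the series defining ln \<Gamma>).  At a large x
  where this phase is \<pi>/2 modulo 2\<pi>, the prefactor is a positive multiple of i; hence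
  Im I_{ix}(\<lambda>) > 0 and K_{ix}(\<lambda>) < 0, and W_\<lambda>(0, x/\<lambda>) < 0.
\<close>

lemma norm_pochhammer_ge_abs_Im:
  fixes z :: complex
  shows "\<bar>Im z\<bar> ^ n \<le> norm (pochhammer z n)"
proof -
  have "\<bar>Im z\<bar> ^ n = (\<Prod>i<n. \<bar>Im (z + of_nat i)\<bar>)" by simp
  also have "\<dots> \<le> (\<Prod>i<n. norm (z + of_nat i))"
    by (intro prod_mono conjI abs_Im_le_cmod abs_ge_zero)
  also have "\<dots> = norm (pochhammer z n)"
    by (simp add: pochhammer_prod prod_norm atLeast0LessThan)
  finally show ?thesis .
qed

definition besselI_reduced_term :: "complex \<Rightarrow> complex \<Rightarrow> nat \<Rightarrow> complex" where
  "besselI_reduced_term \<nu> z n = ((z / 2)\<^sup>2) ^ n / (fact n * pochhammer (\<nu> + 1) n)"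

lemma norm_besselI_reduced_term_le:
  assumes "Im \<nu> \<noteq> 0"
  shows "norm (besselI_reduced_term \<nu> z n) \<le> (norm z ^ 2 / (4 * \<bar>Im \<nu>\<bar>)) ^ n / fact n"
proof -
  have "\<bar>Im \<nu>\<bar> ^ n \<le> norm (pochhammer (\<nu> + 1) n)"
    using norm_pochhammer_ge_abs_Im[of "\<nu> + 1"] by simp
  then have denom: "fact n * \<bar>Im \<nu>\<bar> ^ n \<le> norm (fact n * pochhammer (\<nu> + 1) n)"
    by (simp add: norm_mult)
  have "norm (besselI_reduced_term \<nu> z n) = (norm z ^ 2 / 4) ^ n / norm (fact n * pochhammer (\<nu> + 1) n)"
    by (simp add: besselI_reduced_term_def norm_divide norm_power norm_mult power_divide)
  also have "\<dots> \<le> (norm z ^ 2 / 4) ^ n / (fact n * \<bar>Im \<nu>\<bar> ^ n)"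
  proof (rule divide_left_mono[OF denom])
    have pos: "0 < fact n * \<bar>Im \<nu>\<bar> ^ n" using assms by simp
    show "0 < norm (fact n * pochhammer (\<nu> + 1) n) * (fact n * \<bar>Im \<nu>\<bar> ^ n)"
      by (rule mult_pos_pos[OF less_le_trans[OF pos denom] pos])
  qed simp
  also have "\<dots> = (norm z ^ 2 / (4 * \<bar>Im \<nu>\<bar>)) ^ n / fact n"
    by (simp add: power_divide power_mult_distrib)
  finally show ?thesis .
qed

lemma summable_besselI_reduced_term:
  assumes "Im \<nu> \<noteq> 0"
  shows "summable (besselI_reduced_term \<nu> z)"
proof (rule summable_comparison_test')
  show "summable (\<lambda>n. inverse (fact n) * (norm z ^ 2 / (4 * \<bar>Im \<nu>\<bar>)) ^ n)"
    by (rule summable_exp)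
  show "norm (besselI_reduced_term \<nu> z n) \<le> inverse (fact n) * (norm z ^ 2 / (4 * \<bar>Im \<nu>\<bar>)) ^ n" for n
    using norm_besselI_reduced_term_le[OF assms] by (simp add: field_simps)
qed

lemma norm_suminf_minus_head_le:
  fixes a :: "nat \<Rightarrow> 'a::{banach, real_normed_algebra_1}"
  assumes a0: "a 0 = 1" and bound: "\<And>n. norm (a n) \<le> q ^ n" and q: "q < 1"
  shows "norm (suminf a - 1) \<le> q / (1 - q)"
proof -
  have "0 \<le> q" using order.trans[OF norm_ge_zero bound[of 1]] by simp
  then have geom: "summable (\<lambda>n. q ^ Suc n)" "(\<Sum>n. q ^ Suc n) = q / (1 - q)"
    using q suminf_mult[OF summable_geometric, of q q] suminf_geometric[of q]
    by (auto intro!: summable_mult summable_geometric)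
  have summable_norm_tail: "summable (\<lambda>n. norm (a (Suc n)))"
  proof (rule summable_comparison_test'[OF geom(1)])
    show "norm (norm (a (Suc n))) \<le> q ^ Suc n" for n
      using bound[of "Suc n"] by simp
  qed
  then have "summable a"
    by (metis summable_Suc_iff summable_norm_cancel)
  then have "norm (suminf a - 1) = norm (\<Sum>n. a (Suc n))"
    using a0 by (simp add: suminf_split_head)
  also have "\<dots> \<le> (\<Sum>n. norm (a (Suc n)))"
    by (rule summable_norm[OF summable_norm_tail])
  also have "\<dots> \<le> (\<Sum>n. q ^ Suc n)"
    using bound by (intro suminf_le summable_norm_tail geom(1))
  finally show ?thesis using geom(2) by simp
qed

lemma Re_suminf_besselI_reduced_term_pos:
  assumes "Im \<nu> \<noteq> 0" and "norm z ^ 2 < 2 * \<bar>Im \<nu>\<bar>"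
  shows "0 < Re (suminf (besselI_reduced_term \<nu> z))"
proof -
  define q where "q = norm z ^ 2 / (4 * \<bar>Im \<nu>\<bar>)"
  have q: "0 \<le> q" "q < 1 / 2"
    using assms by (auto simp: q_def field_simps)
  have "norm (besselI_reduced_term \<nu> z n) \<le> q ^ n" for n
  proof -
    have "q ^ n / fact n \<le> q ^ n"
      using q by (simp add: divide_le_eq mult_le_cancel_left1)
    with norm_besselI_reduced_term_le[OF assms(1)] show ?thesis
      unfolding q_def by (rule order.trans)
  qed
  then have "norm (suminf (besselI_reduced_term \<nu> z) - 1) \<le> q / (1 - q)"
    using q by (intro norm_suminf_minus_head_le) (auto simp: besselI_reduced_term_def)
  also have "\<dots> < 1" using q by (simp add: field_simps)
  finally have "\<bar>Re (suminf (besselI_reduced_term \<nu> z) - 1)\<bar> < 1"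
    by (rule le_less_trans[OF abs_Re_le_cmod])
  then show ?thesis by simp
qed

lemma besselI_term_eq_reduced:
  assumes "Im \<nu> \<noteq> 0" and "z \<noteq> 0"
  shows "(z / 2) powr (\<nu> + 2 * of_nat n) * rGamma (of_nat n + \<nu> + 1) / fact n
           = (z / 2) powr \<nu> * rGamma (\<nu> + 1) * besselI_reduced_term \<nu> z n"
proof -
  have powr_eq: "(z / 2) powr (\<nu> + 2 * of_nat n) = (z / 2) powr \<nu> * ((z / 2)\<^sup>2) ^ n"
    using assms(2) powr_complexpow[of "z / 2" "2 * n"]
    by (simp add: powr_add power_mult)
  have rGamma_eq: "rGamma (of_nat n + \<nu> + 1) = rGamma (\<nu> + 1) / pochhammer (\<nu> + 1) n"
  proof -
    have "pochhammer (\<nu> + 1) n \<noteq> 0"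
      unfolding pochhammer_eq_0_iff using assms(1) by (auto dest!: arg_cong[of _ _ Im])
    then show ?thesis
      using pochhammer_rGamma[of "\<nu> + 1" n] by (simp add: field_simps add_ac)
  qed
  show ?thesis
    unfolding powr_eq rGamma_eq besselI_reduced_term_def by (simp add: mult_ac)
qed

lemma besselI_sums:
  assumes "Im \<nu> \<noteq> 0" and "z \<noteq> 0"
  shows "(\<lambda>n. (z / 2) powr (\<nu> + 2 * of_nat n) * rGamma (of_nat n + \<nu> + 1) / fact n)
           sums ((z / 2) powr \<nu> * rGamma (\<nu> + 1) * suminf (besselI_reduced_term \<nu> z))"
  unfolding besselI_term_eq_reduced[OF assms]
  by (intro sums_mult summable_sums summable_besselI_reduced_term assms(1))

lemma besselI_eq_reduced_series:
  assumes "Im \<nu> \<noteq> 0" and "z \<noteq> 0"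
  shows "besselI \<nu> z = (z / 2) powr \<nu> * rGamma (\<nu> + 1) * suminf (besselI_reduced_term \<nu> z)"
  unfolding besselI_def using besselI_sums[OF assms] by (rule sums_unique[symmetric])

lemma besselI_cnj_order:
  fixes l :: real
  assumes "Im \<nu> \<noteq> 0" and "0 < l"
  shows "besselI (cnj \<nu>) (of_real l) = cnj (besselI \<nu> (of_real l))"
proof -
  have "cnj ((of_real l / 2) powr (\<nu> + 2 * of_nat n) * rGamma (of_nat n + \<nu> + 1) / fact n)
      = (of_real l / 2) powr (cnj \<nu> + 2 * of_nat n) * rGamma (of_nat n + cnj \<nu> + 1) / fact n" for n
    using assms(2) by (simp add: cnj_powr cnj_rGamma)
  moreover have "(\<lambda>n. cnj ((of_real l / 2) powr (\<nu> + 2 * of_nat n) * rGamma (of_nat n + \<nu> + 1) / fact n))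
      sums cnj (besselI \<nu> (of_real l))"
    unfolding sums_cnj besselI_def using besselI_sums[of \<nu> "of_real l"] assms
    by (simp add: sums_iff)
  ultimately show ?thesis
    unfolding besselI_def by (simp add: sums_iff)
qed

lemma besselK_imag_order:
  fixes x l :: real
  assumes "x \<noteq> 0" and "0 < l"
  shows "besselK (\<i> * of_real x) (of_real l)
           = of_real (- pi * Im (besselI (\<i> * of_real x) (of_real l)) / sinh (pi * x))"
proof -
  define B where "B = besselI (\<i> * of_real x) (of_real l)"
  have "complex_of_real (sinh (pi * x)) = - \<i> * sin (\<i> * of_real (pi * x))"
    using sinh_real[of "pi * x"] by (simp add: sinh_field_def exp_minus)
  then have sin_eq: "sin (of_real pi * (\<i> * of_real x)) = \<i> * of_real (sinh (pi * x))"
    by (simp add: mult_ac)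
  have sinh_nz: "sinh (pi * x) \<noteq> 0" using assms(1) by simp
  have "besselI (- (\<i> * of_real x)) (of_real l) = cnj B"
    unfolding B_def using besselI_cnj_order[of "\<i> * of_real x" l] assms by simp
  then have "besselK (\<i> * of_real x) (of_real l) = of_real pi / 2 * (cnj B - B) / (\<i> * of_real (sinh (pi * x)))"
    using sinh_nz by (simp add: besselK_def besselK_raw_def sin_eq B_def)
  also have "cnj B - B = - 2 * \<i> * of_real (Im B)" by (simp add: complex_eq_iff)
  finally show ?thesis
    using sinh_nz by (simp add: B_def field_simps)
qed

lemma inverse_Suc_le_ln_Suc_minus_ln:
  assumes "1 \<le> n"
  shows "1 / real (Suc n) \<le> ln (real (Suc n)) - ln (real n)"
proof -
  have "ln (real n / real (Suc n)) \<le> real n / real (Suc n) - 1"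
    using assms by (intro ln_le_minus_one) auto
  also have "\<dots> = - (1 / real (Suc n))" by (simp add: field_simps)
  finally show ?thesis using assms by (simp add: ln_div)
qed

lemma sum_arctan_le:
  fixes m n :: nat
  assumes "1 \<le> m" and "m \<le> n"
  shows "(\<Sum>j=1..n. arctan (real m / real j)) \<le> real m * pi / 2 + real m * (ln (real n) - ln (real m))"
  using assms(2)
proof (induction n rule: dec_induct)
  case base
  have "(\<Sum>j=1..m. arctan (real m / real j)) \<le> (\<Sum>j=1..m. pi / 2)"
    by (intro sum_mono less_imp_le arctan_ubound)
  then show ?case by simp
next
  case (step n)
  have "arctan (real m / real (Suc n)) \<le> real m * (1 / real (Suc n))"
    by (simp add: arctan_le_self)
  also have "\<dots> \<le> real m * (ln (real (Suc n)) - ln (real n))"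
    using step assms(1) by (intro mult_left_mono inverse_Suc_le_ln_Suc_minus_ln) auto
  finally show ?case using step by (simp add: algebra_simps)
qed

lemma Im_ln_Gamma_series_imag:
  fixes x :: real
  assumes "0 < n"
  shows "Im (ln_Gamma_series (1 + \<i> * of_real x) n) = x * ln (real n) - (\<Sum>j=1..Suc n. arctan (x / real j))"
proof -
  have Im_Ln: "Im (Ln (Complex a b)) = arctan (b / a)" if "0 < a" for a b
    using that by (subst Im_Ln_eq) (auto simp: complex_eq_iff)
  have "1 + \<i> * of_real x = Complex 1 x" by (simp add: complex_eq_iff)
  moreover have "(1 + \<i> * of_real x) / of_nat k + 1 = Complex (real (Suc k) / k) (x / k)"
    if "1 \<le> k" for k
    using that by (simp add: complex_eq_iff field_simps)
  moreover have "(x / k) / (real (Suc k) / k) = x / real (Suc k)" if "1 \<le> k" for k :: nat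
    using that by (simp add: field_simps)
  ultimately have "Im (Ln (1 + \<i> * of_real x)) = arctan x"
    and Im_Ln_k: "\<And>k. 1 \<le> k \<Longrightarrow> Im (Ln ((1 + \<i> * of_real x) / of_nat k + 1)) = arctan (x / real (Suc k))"
    by (simp_all add: Im_Ln)
  moreover have "(\<Sum>j=1..Suc n. arctan (x / real j)) = arctan x + (\<Sum>k=1..n. arctan (x / real (Suc k)))"
    by (simp add: sum.atLeast_Suc_atMost sum.shift_bounds_cl_Suc_ivl del: sum.cl_ivl_Suc)
  ultimately show ?thesis
    using assms by (simp add: ln_Gamma_series_def Im_sum Im_Ln_k)
qed

lemma Im_ln_Gamma_imag_ge:
  fixes m :: nat
  assumes m: "1 \<le> m"
  shows "real m * ln (real m) - real m * pi / 2 \<le> Im (ln_Gamma (1 + \<i> * of_real (real m)))"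
proof -
  let ?z = "1 + \<i> * complex_of_real (real m)"
  have "?z \<notin> \<int>\<^sub>\<le>\<^sub>0"
    by (auto elim!: nonpos_Ints_cases simp: complex_eq_iff)
  then have "(\<lambda>n. Im (ln_Gamma_series ?z n)) \<longlonglongrightarrow> Im (ln_Gamma ?z)"
    by (intro tendsto_Im ln_Gamma_complex_LIMSEQ)
  moreover have "(\<lambda>n. real m * (ln (real (Suc n)) - ln (real n))) \<longlonglongrightarrow> 0"
    by real_asymp
  ultimately have lim: "(\<lambda>n. Im (ln_Gamma_series ?z n) + real m * (ln (real (Suc n)) - ln (real n)))
      \<longlonglongrightarrow> Im (ln_Gamma ?z)"
    using tendsto_add by fastforce
  show ?thesis
  proof (rule LIMSEQ_le_const[OF lim], intro exI allI impI)
    fix n assume n: "m \<le> n"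
    have "(\<Sum>j=1..Suc n. arctan (real m / real j))
        \<le> real m * pi / 2 + real m * (ln (real (Suc n)) - ln (real m))"
      using m n by (intro sum_arctan_le) auto
    moreover have "Im (ln_Gamma_series ?z n) = real m * ln (real n) - (\<Sum>j=1..Suc n. arctan (real m / real j))"
      using m n by (intro Im_ln_Gamma_series_imag) auto
    ultimately show "real m * ln (real m) - real m * pi / 2
        \<le> Im (ln_Gamma_series ?z n) + real m * (ln (real (Suc n)) - ln (real n))"
      by (simp add: algebra_simps)
  qed
qed

lemma exists_cis_eq_if_unbounded_below:
  fixes \<theta> :: "real \<Rightarrow> real"
  assumes cont: "continuous_on {a..} \<theta>" and unbounded: "\<And>B. \<exists>y\<ge>a. \<theta> y \<le> B"
  shows "\<exists>x\<ge>a. cis (\<theta> x) = cis t"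
proof -
  obtain N :: nat where "(t - \<theta> a) / (2 * pi) < real N"
    using reals_Archimedean2 by blast
  then have "t - 2 * pi * real N \<le> \<theta> a"
    by (simp add: field_simps)
  moreover obtain y where "a \<le> y" "\<theta> y \<le> t - 2 * pi * real N"
    using unbounded by blast
  moreover have "continuous_on {a..y} \<theta>"
    using cont by (rule continuous_on_subset) auto
  ultimately obtain x where "a \<le> x" "\<theta> x = t - 2 * pi * real N"
    using IVT2'[of \<theta> y "t - 2 * pi * real N" a] by auto
  moreover have "cis (t - 2 * pi * real N) = cis t"
    by (simp flip: cis_divide)
  ultimately show ?thesis by auto
qed

lemma imag_order_phase_unbounded_below:
  fixes a L B :: real
  shows "\<exists>y\<ge>a. y * L - Im (ln_Gamma (1 + \<i> * of_real y)) \<le> B"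
proof -
  obtain m :: nat where m: "max a (max 1 (max (exp (L + pi / 2 + 1)) (- B))) < real m"
    using reals_Archimedean2 by blast
  then have m1: "1 \<le> m" by simp
  have "ln (exp (L + pi / 2 + 1)) < ln (real m)"
    using m by (intro ln_less_cancel_iff[THEN iffD2]) auto
  then have "real m * (L + pi / 2 - ln (real m)) \<le> real m * (- 1)"
    by (intro mult_left_mono) auto
  moreover have "real m * L - Im (ln_Gamma (1 + \<i> * of_real (real m))) \<le> real m * (L + pi / 2 - ln (real m))"
    using Im_ln_Gamma_imag_ge[OF m1] by (simp add: algebra_simps)
  ultimately have "real m * L - Im (ln_Gamma (1 + \<i> * of_real (real m))) \<le> B"
    using m by linarith
  moreover have "a \<le> real m" using m by simp
  ultimately show ?thesis by blast
qed

lemma besselI_prefactor_imag_order: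
  fixes l x :: real
  assumes "0 < l"
  defines "G \<equiv> ln_Gamma (1 + \<i> * of_real x)"
  shows "(of_real l / 2) powr (\<i> * of_real x) * rGamma (\<i> * of_real x + 1)
           = of_real (exp (- Re G)) * cis (x * ln (l / 2) - Im G)"
proof -
  have "1 + \<i> * of_real x \<notin> \<int>\<^sub>\<le>\<^sub>0"
    by (auto elim!: nonpos_Ints_cases simp: complex_eq_iff)
  then have "rGamma (\<i> * of_real x + 1) = exp (- G)"
    by (simp add: G_def rGamma_complex_altdef add.commute)
  moreover have "(of_real l / 2) powr (\<i> * of_real x) = exp (\<i> * of_real (x * ln (l / 2)))"
    using assms(1) by (simp add: powr_def Ln_of_real[symmetric] mult_ac)
  ultimately have "(of_real l / 2) powr (\<i> * of_real x) * rGamma (\<i> * of_real x + 1)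
      = exp (\<i> * of_real (x * ln (l / 2)) + - G)"
    by (simp only: exp_add)
  also have "\<i> * of_real (x * ln (l / 2)) + - G = of_real (- Re G) + \<i> * of_real (x * ln (l / 2) - Im G)"
    by (simp add: complex_eq_iff)
  finally show ?thesis
    by (simp only: exp_add exp_of_real flip: cis_conv_exp)
qed

lemma Im_besselI_imag_order_pos:
  fixes l :: real
  assumes l: "0 < l"
  shows "\<exists>x>0. 0 < Im (besselI (\<i> * of_real x) (of_real l))"
proof -
  define \<theta> where "\<theta> y = y * ln (l / 2) - Im (ln_Gamma (1 + \<i> * of_real y))" for y
  have "continuous_on {l\<^sup>2 / 2 + 1..} \<theta>"
    unfolding \<theta>_def
    by (intro continuous_intros continuous_on_compose2[OF continuous_on_ln_Gamma_complex[of "{z. Re z > 0}"]])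
       (auto simp: complex_nonpos_Reals_iff)
  then obtain x where x: "l\<^sup>2 / 2 + 1 \<le> x" and phase: "cis (\<theta> x) = \<i>"
    using exists_cis_eq_if_unbounded_below[of _ \<theta> "pi / 2"] imag_order_phase_unbounded_below
    unfolding \<theta>_def by fastforce
  have x0: "0 < x" using x zero_le_power2[of l] by linarith
  define G where "G = ln_Gamma (1 + \<i> * of_real x)"
  have "besselI (\<i> * of_real x) (of_real l)
      = \<i> * of_real (exp (- Re G)) * suminf (besselI_reduced_term (\<i> * of_real x) (of_real l))"
    using besselI_eq_reduced_series[of "\<i> * of_real x" "of_real l"] x0 l
          besselI_prefactor_imag_order[OF l, of x] phase
    by (simp add: G_def \<theta>_def)
  moreover have "0 < Re (suminf (besselI_reduced_term (\<i> * of_real x) (of_real l)))"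
    using x x0 by (intro Re_suminf_besselI_reduced_term_pos) auto
  ultimately show ?thesis using x0 by auto
qed

lemma besselK_imag_order_neg:
  fixes l :: real
  assumes l: "0 < l"
  shows "\<exists>x>0. besselK (\<i> * of_real x) (of_real l) \<in> \<real> \<and> Re (besselK (\<i> * of_real x) (of_real l)) < 0"
proof -
  obtain x where x: "0 < x" and pos: "0 < Im (besselI (\<i> * of_real x) (of_real l))"
    using Im_besselI_imag_order_pos[OF l] by blast
  have "0 < pi * Im (besselI (\<i> * of_real x) (of_real l)) / sinh (pi * x)"
    using x pos by simp
  then show ?thesis
    using besselK_imag_order[of x l] x l by auto
qed

theorem mainTheorem9:
  shows "(\<forall>l::real. l > 0 \<longrightarrow>
            (\<exists>x::real. besselK (\<i> * complex_of_real x) (complex_of_real l) \<in> \<real> \<and>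
                        Re (besselK (\<i> * complex_of_real x) (complex_of_real l)) < 0))
       \<and> (\<forall>l::real. l > 0 \<longrightarrow>
            \<not> is_prob_density (\<lambda>(m, u). W l m u) ({-1<..<1} \<times> UNIV))"
proof (intro conjI allI impI)
  fix l :: real
  assume "0 < l"
  then show "\<exists>x. besselK (\<i> * of_real x) (of_real l) \<in> \<real> \<and> Re (besselK (\<i> * of_real x) (of_real l)) < 0"
    using besselK_imag_order_neg by blast
next
  fix l :: real
  assume l: "0 < l"
  then obtain x where "Re (besselK (\<i> * of_real x) (of_real l)) < 0"
    using besselK_imag_order_neg by blast
  then have "W l 0 (x / l) < 0"
    using l by (simp add: W_def mult_pos_neg mult_neg_pos divide_neg_pos)
  then show "\<not> is_prob_density (\<lambda>(m, u). W l m u) ({-1<..<1} \<times> UNIV)"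
    unfolding is_prob_density_def by (fastforce dest: bspec[of _ _ "(0, x / l)"])
qed

end
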